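(* Let $f$ and $g$ be discrete curves whose points lie on two distinct spheres $s^1,s^2\in\mathbb{P}(\mathcal{L})$, i.e. $\langle\mathfrak{f}_i,\mathfrak{s}^1\rangle=\langle\mathfrak{g}_i,\mathfrak{s}^2\rangle=0$ for all vertices $i$. If $(f,g)$ is a discrete Ribaucour pair, then every element of the 3-dimensional subspace $\mathcal{M}:=\mathrm{span}\{\mathfrak{s}^1,\mathfrak{s}^2,\mathfrak{p}\}\subset\mathbb{R}^{4,2}$ is a fixed point of every M-inversion of the R-evolution map of $(f,g)$.
   Context: Light cone model: $\mathbb{R}^{4,2}$ is $\mathbb{R}^6$ with a symmetric bilinear form $\langle\cdot,\cdot\rangle$ of signature $(4,2)$; $\mathcal{L}$ its light cone, $\mathbb{P}(\mathcal{L})$ its projectivization. A fixed vector $\mathfrak{p}$ with $\langle\mathfrak{p},\mathfrak{p}\rangle=-1$ is given; $v\in\mathbb{P}(\mathcal{L})$ with $\langle\mathfrak{v},\mathfrak{p}\rangle=0$ represent points of $\mathbb{R}^3\cup\{\infty\}$, the others oriented spheres (planes included); a point lies on a sphere iff representatives are orthogonal. Fraktur letters denote representatives. Inversion in $\mathfrak{a}$ ($\langle\mathfrak{a},\mathfrak{a}\rangle\neq0$): $\sigma_a(x)=x-\frac{2\langle x,\mathfrak{a}\rangle}{\langle\mathfrak{a},\mathfrak{a}\rangle}\mathfrak{a}$; M-inversion if $\langle\mathfrak{a},\mathfrak{p}\rangle=0$. A discrete curve is a map $f:\mathcal{V}\to\mathbb{P}(\mathcal{L})$ into points, $\mathcal{V}$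 a set of consecutive integers with edges $(ij)$ between consecutive vertices. Curves $f,g$ form a Ribaucour pair if for each edge $(ij)$ the points $f_i,f_j,g_j,g_i$ are concircular (linearly dependent representatives); then representatives can be chosen with $\mathfrak{f}_i-\mathfrak{f}_j+\mathfrak{g}_j-\mathfrak{g}_i=0$ and the R-evolution map assigns to $(ij)$ the M-inversion in $\mathfrak{r}_{ij}:=\mathfrak{f}_i-\mathfrak{f}_j=\mathfrak{g}_i-\mathfrak{g}_j$, the unique M-inversion mapping $f_i\mapsto f_j$ and $g_i\mapsto g_j$. *)

theory Defs
  imports "HOL-Analysis.Analysis"
begin

text \<open>R^{4,2}: real^6 with the standard symmetric bilinear form of signature (4,2)
  (coordinates 0..3 positive, 4..5 negative). Every signature (4,2) form is
  isometric to this one.\<close>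

definition sig :: "6 \<Rightarrow> real" where
  "sig i = (if i = 4 \<or> i = 5 then -1 else 1)"

definition blf :: "real^6 \<Rightarrow> real^6 \<Rightarrow> real" where
  "blf x y = (\<Sum>i\<in>UNIV. sig i * (x $ i) * (y $ i))"

text \<open>Nonzero representative of an element of P(L).\<close>
definition lightlike :: "real^6 \<Rightarrow> bool" where
  "lightlike x \<longleftrightarrow> x \<noteq> 0 \<and> blf x x = 0"

text \<open>Representative of a point of R^3 \<union> {\<infinity>} (relative to the fixed vector p).\<close>
definition is_point :: "real^6 \<Rightarrow> real^6 \<Rightarrow> bool" where
  "is_point p x \<longleftrightarrow> lightlike x \<and> blf x p = 0"

text \<open>Representative of an oriented sphere (planes included).\<close>
definition is_sphere :: "real^6 \<Rightarrow> real^6 \<Rightarrow> bool" where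
  "is_sphere p x \<longleftrightarrow> lightlike x \<and> blf x p \<noteq> 0"

definition proj_eq :: "real^6 \<Rightarrow> real^6 \<Rightarrow> bool" where
  "proj_eq x y \<longleftrightarrow> (\<exists>c. c \<noteq> 0 \<and> y = c *\<^sub>R x)"

definition concircular :: "real^6 \<Rightarrow> real^6 \<Rightarrow> real^6 \<Rightarrow> real^6 \<Rightarrow> bool" where
  "concircular a b c d \<longleftrightarrow>
     (\<exists>\<alpha> \<beta> \<gamma> \<delta>. (\<alpha>, \<beta>, \<gamma>, \<delta>) \<noteq> (0, 0, 0, 0) \<and>
        \<alpha> *\<^sub>R a + \<beta> *\<^sub>R b + \<gamma> *\<^sub>R c + \<delta> *\<^sub>R d = 0)"

definition inversion :: "real^6 \<Rightarrow> real^6 \<Rightarrow> real^6" where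
  "inversion a x = x - (2 * blf x a / blf a a) *\<^sub>R a"

text \<open>Vertex set of a discrete curve: a set of consecutive integers.\<close>
definition consecutive :: "int set \<Rightarrow> bool" where
  "consecutive V \<longleftrightarrow> (\<forall>i\<in>V. \<forall>j\<in>V. {i..j} \<subseteq> V)"

definition ribaucour_pair :: "int set \<Rightarrow> (int \<Rightarrow> real^6) \<Rightarrow> (int \<Rightarrow> real^6) \<Rightarrow> bool" where
  "ribaucour_pair V f g \<longleftrightarrow>
     (\<forall>i. i \<in> V \<longrightarrow> i + 1 \<in> V \<longrightarrow> concircular (f i) (f (i + 1)) (g (i + 1)) (g i))"

end

theory Submission
  imports Defs
begin

text \<open>The M-inversion vector r = a f_i - b f_{i+1} = d g_i - c g_{i+1} of an edge is orthogonal
  to s1 by its first expression, to s2 by its second, and to p because all points are.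
  Hence r is orthogonal to the whole span M of s1, s2, p, and an inversion fixes every vector
  orthogonal to its centre.\<close>

lemma blf_commute: "blf x y = blf y x"
  by (simp add: blf_def algebra_simps)

lemma blf_add_left: "blf (x + y) z = blf x z + blf y z"
  by (simp add: blf_def sum.distrib[symmetric] algebra_simps)

lemma blf_scaleR_left: "blf (c *\<^sub>R x) z = c * blf x z"
  by (simp add: blf_def sum_distrib_left algebra_simps)

lemma blf_diff_left: "blf (x - y) z = blf x z - blf y z"
  by (simp add: blf_def sum_subtractf[symmetric] algebra_simps)

lemma linear_blf_left: "linear (\<lambda>x. blf x z)"
  by (rule linearI) (simp_all add: blf_add_left blf_scaleR_left)

lemma blf_eq_0_on_span:
  assumes "\<And>y. y \<in> S \<Longrightarrow> blf y z = 0" and "x \<in> span S"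
  shows "blf x z = 0"
  using assms by (rule real_vector.linear_eq_0_on_span[OF linear_blf_left])

lemma inversion_fixes_orthogonal: "blf x a = 0 \<Longrightarrow> inversion a x = x"
  by (simp add: inversion_def)

theorem proposition2p3:
  fixes p s1 s2 :: "real^6" and f g :: "int \<Rightarrow> real^6" and V :: "int set"
  assumes p: "blf p p = -1"
    and V: "consecutive V"
    and curves: "\<forall>i\<in>V. is_point p (f i) \<and> is_point p (g i)"
    and spheres: "is_sphere p s1" "is_sphere p s2" "\<not> proj_eq s1 s2"
    and on_spheres: "\<forall>i\<in>V. blf (f i) s1 = 0 \<and> blf (g i) s2 = 0"
    and rib: "ribaucour_pair V f g"
  shows "\<forall>i a b c d. i \<in> V \<longrightarrow> i + 1 \<in> V \<longrightarrow>
           a \<noteq> 0 \<longrightarrow> b \<noteq> 0 \<longrightarrow> c \<noteq> 0 \<longrightarrow> d \<noteq> 0 \<longrightarrow>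
           a *\<^sub>R f i - b *\<^sub>R f (i + 1) + c *\<^sub>R g (i + 1) - d *\<^sub>R g i = 0 \<longrightarrow>
           (let r = a *\<^sub>R f i - b *\<^sub>R f (i + 1) in
              blf r r \<noteq> 0 \<longrightarrow>
              (\<forall>x\<in>span {s1, s2, p}. inversion r x = x))"
proof (intro allI impI)
  fix i a b c d
  assume i: "i \<in> V" "i + 1 \<in> V"
    and closed: "a *\<^sub>R f i - b *\<^sub>R f (i + 1) + c *\<^sub>R g (i + 1) - d *\<^sub>R g i = 0"
  define r where "r = a *\<^sub>R f i - b *\<^sub>R f (i + 1)"
  have r_via_g: "r = d *\<^sub>R g i - c *\<^sub>R g (i + 1)"
    using closed unfolding r_def by (simp add: algebra_simps eq_neg_iff_add_eq_0)
  have s1_r: "blf s1 r = 0"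
    using on_spheres i by (simp add: r_def blf_diff_left blf_scaleR_left blf_commute[of s1])
  have s2_r: "blf s2 r = 0"
    using on_spheres i by (simp add: r_via_g blf_diff_left blf_scaleR_left blf_commute[of s2])
  have p_r: "blf p r = 0"
    using curves i
    by (simp add: r_def is_point_def blf_diff_left blf_scaleR_left blf_commute[of p])
  have "blf y r = 0" if "y \<in> {s1, s2, p}" for y
    using that s1_r s2_r p_r by auto
  then have "blf x r = 0" if "x \<in> span {s1, s2, p}" for x
    using that by (rule blf_eq_0_on_span)
  then show "let r = a *\<^sub>R f i - b *\<^sub>R f (i + 1) in blf r r \<noteq> 0 \<longrightarrow>
              (\<forall>x\<in>span {s1, s2, p}. inversion r x = x)"
    by (simp add: r_def inversion_fixes_orthogonal)
qed

end
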